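(* Consider the coalition formation algorithm for user association (described in the context) applied to a finite set of users $\mathbf{A}\cup\mathbf{D}$ with $n+1$ coalitions $C_0,\dots,C_n$. Starting from an arbitrary initial partition $C_{ini}$, the algorithm always finds a final partition $C_{fin}$ after a finite number of switch operations, and $C_{fin}$ consists of (at most $n+1$) pairwise disjoint coalitions whose union is $\mathbf{A}\cup\mathbf{D}$.
   Context: Setting: a downlink mmWave system with one base station (BS), indexed $n$, and $n$ mobile relays (MRs), indexed $i=0,1,\dots,n-1$. The finite set of users (players) is $\mathbf{A}\cup\mathbf{D}$. A partition (coalition structure) is $C=\{C_0,C_1,\dots,C_n\}$ with $C_i\cap C_{i'}=\emptyset$ for $i\neq i'$ and $\bigcup_{i=0}^n C_i=\mathbf{A}\cup\mathbf{D}$; $C_i$ is the set of users associated with MR $i$ ($i<n$) or with the BS ($i=n$). Each coalition $C_i$ has a real-valued utility $U(C_i)$, namely its average throughput $U(C_i)=\frac{1}{|C_i|}\sum_{l\in C_i}R_l$, where for a user $l\in C_n$ (BS) $R_l=\alpha_n W\log_2(1+P_r(n,l)/(N_0\alpha_n W))$ and for a user $l\in C_i$, $i<n$ (MR), $R_l=\alpha_i W\log_2\bigl(1+P_r(i,l)/(N_0\alpha_i W+\beta P_i)\bigr)$; here $W>0$ is the total bandwidth, $\alpha_i\ge 0$ with $\sum_{i=0}^n\alpha_i=1$ are fixed bandwidth fractions, $P_r(i,l)>0$ is the received power at user $l$ from the BS/MR $i$, $N_0>0$ the noise spectral density, $P_i$ the MR transmit power and $\beta\ge0$ the self-interference cancellation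 factor. Preference order: for a user $l$ currently in coalition $C_{i'}$ and another coalition $C_i$ ($i\ne i'$), $l$ prefers $C_i$ to $C_{i'}$, written $C_i\succ_l C_{i'}$, iff the sum of the utilities of the two coalitions strictly increases when $l$ moves, i.e. $U(C_i\cup\{l\})+U(C_{i'}\setminus\{l\})>U(C_i)+U(C_{i'})$ (the paper writes this as $U(C_i)+U(C_{i'}\setminus l)>U(C_i\setminus l)+U(C_{i'})$). Switch operation: if $C_i\succ_l C_{i'}$ for $l\in C_{i'}$, move $l$ from $C_{i'}$ to $C_i$, replacing $C$ by $(C\setminus\{C_i,C_{i'}\})\cup\{C_{i'}\setminus\{l\},C_i\cup\{l\}\}$. Algorithm: (1) form a random initial partition $C_{ini}$, set $C_{cur}=C_{ini}$, $j=0$; (2) repeat: select a user $l$ in a predetermined order, with current coalition $C_i$; if there is a coalition $C_{i'}$ with $C_{i'}\succ_l C_i$ and ($|C_{i'}|+1\le Y$ if $i'=n$, or $|C_{i'}|+1\le Z$ if $i'\in\{0,\dots,n-1\}$), where $Y,Z$ are the maximal numbers of users the BS and each MR can serve, then set $j=0$ and perform the switch of $l$ from $C_i$ to $C_{i'}$; otherwise set $j=j+1$; (3) stop when the partition reaches a stable state (no switch has occurred for $j=10(|\mathbf{A}|+|\mathbf{D}|)$ consecutive selections); the resulting partition is $C_{fin}$. *)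

theory Defs
  imports Complex_Main
begin

text \<open>Users have an arbitrary type 'u; the finite user set A \<union> D is a set UU.
  Coalitions are indexed 0..n: index i < n is MR i, index n is the BS.
  A partition is a family C :: nat \<Rightarrow> 'u set, only indices 0..n matter.\<close>

definition is_partition :: "'u set \<Rightarrow> nat \<Rightarrow> (nat \<Rightarrow> 'u set) \<Rightarrow> bool" where
  "is_partition UU n C \<longleftrightarrow>
     (\<forall>i\<le>n. \<forall>i'\<le>n. i \<noteq> i' \<longrightarrow> C i \<inter> C i' = {}) \<and> (\<Union>i\<le>n. C i) = UU"

definition rate ::
  "real \<Rightarrow> (nat \<Rightarrow> real) \<Rightarrow> (nat \<Rightarrow> 'u \<Rightarrow> real) \<Rightarrow> real \<Rightarrow> (nat \<Rightarrow> real) \<Rightarrow> real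
   \<Rightarrow> nat \<Rightarrow> nat \<Rightarrow> 'u \<Rightarrow> real" where
  "rate W \<alpha> Pr N0 P \<beta> n i l =
     (if i = n then \<alpha> n * W * log 2 (1 + Pr n l / (N0 * \<alpha> n * W))
      else \<alpha> i * W * log 2 (1 + Pr i l / (N0 * \<alpha> i * W + \<beta> * P i)))"

definition throughput_util ::
  "real \<Rightarrow> (nat \<Rightarrow> real) \<Rightarrow> (nat \<Rightarrow> 'u \<Rightarrow> real) \<Rightarrow> real \<Rightarrow> (nat \<Rightarrow> real) \<Rightarrow> real
   \<Rightarrow> nat \<Rightarrow> nat \<Rightarrow> 'u set \<Rightarrow> real" where
  "throughput_util W \<alpha> Pr N0 P \<beta> n i S =
     (\<Sum>l\<in>S. rate W \<alpha> Pr N0 P \<beta> n i l) / real (card S)"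

definition prefers ::
  "(nat \<Rightarrow> 'u set \<Rightarrow> real) \<Rightarrow> (nat \<Rightarrow> 'u set) \<Rightarrow> 'u \<Rightarrow> nat \<Rightarrow> nat \<Rightarrow> bool" where
  "prefers U C l i i' \<longleftrightarrow>
     U i' (C i' \<union> {l}) + U i (C i - {l}) > U i' (C i') + U i (C i)"

definition switch_op :: "(nat \<Rightarrow> 'u set) \<Rightarrow> 'u \<Rightarrow> nat \<Rightarrow> nat \<Rightarrow> (nat \<Rightarrow> 'u set)" where
  "switch_op C l i i' = C(i := C i - {l}, i' := C i' \<union> {l})"

definition admissible ::
  "(nat \<Rightarrow> 'u set \<Rightarrow> real) \<Rightarrow> nat \<Rightarrow> nat \<Rightarrow> nat \<Rightarrow> (nat \<Rightarrow> 'u set) \<Rightarrow> 'u \<Rightarrow> nat \<Rightarrow> nat \<Rightarrow> bool" where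
  "admissible U n Y Z C l i i' \<longleftrightarrow>
     i' \<le> n \<and> i' \<noteq> i \<and> prefers U C l i i' \<and>
     card (C i') + 1 \<le> (if i' = n then Y else Z)"

text \<open>Algorithm state: (current partition, counter j, selection index k).
  The k-th selection picks user ord k (the predetermined order).\<close>
type_synonym 'u alg_state = "(nat \<Rightarrow> 'u set) \<times> nat \<times> nat"

definition alg_step ::
  "(nat \<Rightarrow> 'u set \<Rightarrow> real) \<Rightarrow> nat \<Rightarrow> nat \<Rightarrow> nat \<Rightarrow> (nat \<Rightarrow> 'u) \<Rightarrow> 'u alg_state \<Rightarrow> 'u alg_state \<Rightarrow> bool" where
  "alg_step U n Y Z ord s s' \<longleftrightarrow>
     (case s of (C, j, k) \<Rightarrow>
       (\<exists>i\<le>n. ord k \<in> C i \<and>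
          ((\<exists>i'. admissible U n Y Z C (ord k) i i' \<and> s' = (switch_op C (ord k) i i', 0, Suc k))
           \<or> ((\<nexists>i'. admissible U n Y Z C (ord k) i i') \<and> s' = (C, Suc j, Suc k)))))"

definition alg_stopped :: "'u set \<Rightarrow> 'u alg_state \<Rightarrow> bool" where
  "alg_stopped UU s \<longleftrightarrow> fst (snd s) \<ge> 10 * card UU"

end

theory Submission
  imports Defs "HOL-Library.FuncSet"
begin

text \<open>The sum of the coalition utilities is an exact potential for switch operations: a switch
  changes only the two coalitions involved, so it raises the sum by exactly the gain that made
  the user prefer it. Since there are finitely many partitions, the potential can increase only
  finitely often, and between two switches the counter j grows by one per selection, so it
  eventually reaches 10(|A|+|D|).\<close>

definition potential :: "(nat \<Rightarrow> 'u set \<Rightarrow> real) \<Rightarrow> nat \<Rightarrow> (nat \<Rightarrow> 'u set) \<Rightarrow> real" where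
  "potential U n C = (\<Sum>i\<le>n. U i (C i))"

lemma is_partition_switch_op:
  assumes "is_partition UU n C" "i \<le> n" "l \<in> C i" "i' \<le> n" "i' \<noteq> i"
  shows "is_partition UU n (switch_op C l i i')"
proof -
  have disj: "\<And>a b. a \<le> n \<Longrightarrow> b \<le> n \<Longrightarrow> a \<noteq> b \<Longrightarrow> C a \<inter> C b = {}"
    and cover: "(\<Union>a\<le>n. C a) = UU"
    using assms(1) unfolding is_partition_def by auto
  have "l \<notin> C a" if "a \<le> n" "a \<noteq> i" for a
    using disj[OF that(1) assms(2)] that assms(3) by blast
  then show ?thesis
    using disj cover assms(2-5) unfolding is_partition_def switch_op_def
    by (auto simp: fun_upd_def)
qed

lemma potential_switch_op_gt:
  assumes "prefers U C l i i'" "i \<le> n" "i' \<le> n" "i' \<noteq> i"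
  shows "potential U n C < potential U n (switch_op C l i i')"
proof -
  define gain where "gain x = U x (switch_op C l i i' x) - U x (C x)" for x
  have "(\<Sum>x\<le>n. gain x) = (\<Sum>x\<in>{i, i'}. gain x)"
    by (rule sum.mono_neutral_right) (auto simp: gain_def switch_op_def assms)
  also have "\<dots> = gain i + gain i'"
    using assms(4) by simp
  also have "\<dots> > 0"
    using assms(1,4) unfolding gain_def prefers_def switch_op_def by auto
  finally show ?thesis
    by (simp add: potential_def gain_def sum_subtractf)
qed

lemma finite_potential_partitions:
  assumes "finite UU"
  shows "finite (potential U n ` {C. is_partition UU n C})"
proof (rule finite_subset)
  show "potential U n ` {C. is_partition UU n C}
      \<subseteq> potential U n ` (\<Pi>\<^sub>E i\<in>{..n}. Pow UU)"
  proof (rule image_subsetI)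
    fix C assume "C \<in> {C. is_partition UU n C}"
    then have "restrict C {..n} \<in> (\<Pi>\<^sub>E i\<in>{..n}. Pow UU)"
      unfolding is_partition_def by auto
    moreover have "potential U n C = potential U n (restrict C {..n})"
      unfolding potential_def by (rule sum.cong) auto
    ultimately show "potential U n C \<in> potential U n ` (\<Pi>\<^sub>E i\<in>{..n}. Pow UU)"
      by blast
  qed
  show "finite (potential U n ` (\<Pi>\<^sub>E i\<in>{..n}. Pow UU))"
    using assms by (intro finite_imageI finite_PiE) auto
qed

lemma alg_step_cases:
  assumes "alg_step U n Y Z ord (C, j, q) s'" "is_partition UU n C"
  obtains C' where "s' = (C', 0, Suc q)" "is_partition UU n C'"
      "potential U n C < potential U n C'"
    | "s' = (C, Suc j, Suc q)"
proof -
  from assms(1) obtain i where i: "i \<le> n" "ord q \<in> C i"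
    and alt: "(\<exists>i'. admissible U n Y Z C (ord q) i i' \<and> s' = (switch_op C (ord q) i i', 0, Suc q))
      \<or> s' = (C, Suc j, Suc q)"
    unfolding alg_step_def by auto
  show thesis
  proof (cases "s' = (C, Suc j, Suc q)")
    case False
    with alt obtain i' where "admissible U n Y Z C (ord q) i i'"
      and s': "s' = (switch_op C (ord q) i i', 0, Suc q)"
      by blast
    then have "i' \<le> n" "i' \<noteq> i" "prefers U C (ord q) i i'"
      unfolding admissible_def by auto
    then show thesis
      using that(1)[OF s' is_partition_switch_op[OF assms(2) i] potential_switch_op_gt] i
      by blast
  qed (rule that(2))
qed

lemma card_greater_less:
  fixes x y :: "'a :: linorder"
  assumes "finite V" "y \<in> V" "x < y"
  shows "card {v\<in>V. y < v} < card {v\<in>V. x < v}"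
  using assms by (intro psubset_card_mono) auto

text \<open>A switch lowers the number of potential values still above the current one, which
  outweighs resetting the counter; otherwise the counter moves towards the bound B.\<close>

definition switch_measure ::
  "'u set \<Rightarrow> (nat \<Rightarrow> 'u set \<Rightarrow> real) \<Rightarrow> nat \<Rightarrow> nat \<Rightarrow> 'u alg_state \<Rightarrow> nat" where
  "switch_measure UU U n B t =
     card {v \<in> potential U n ` {C. is_partition UU n C}. potential U n (fst t) < v} * (B + 1)
     + (B - fst (snd t))"

lemma alg_step_switch_measure_less:
  assumes "finite UU" "alg_step U n Y Z ord s s'" "is_partition UU n (fst s)"
    and "fst (snd s) < B"
  shows "is_partition UU n (fst s') \<and> switch_measure UU U n B s' < switch_measure UU U n B s"
proof -
  define V where "V = potential U n ` {C. is_partition UU n C}"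
  obtain C j q where s: "s = (C, j, q)" by (cases s) auto
  from assms(2,3) s consider
      C' where "s' = (C', 0, Suc q)" "is_partition UU n C'" "potential U n C < potential U n C'"
    | "s' = (C, Suc j, Suc q)"
    using alg_step_cases by (metis fst_conv)
  then show ?thesis
  proof cases
    case (1 C')
    have "card {v\<in>V. potential U n C' < v} < card {v\<in>V. potential U n C < v}"
      using 1 finite_potential_partitions[OF assms(1)] unfolding V_def
      by (intro card_greater_less) auto
    then have "(card {v\<in>V. potential U n C' < v} + 1) * (B + 1)
        \<le> card {v\<in>V. potential U n C < v} * (B + 1)"
      by (intro mult_right_mono) auto
    then show ?thesis
      using 1 s by (simp add: switch_measure_def V_def)
  next
    case 2
    then show ?thesis
      using assms(3,4) s by (simp add: switch_measure_def)
  qed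
qed

lemma first_stop_exists:
  fixes \<mu> :: "'a \<Rightarrow> nat"
  assumes "I (s 0)"
    and "\<And>k. I (s k) \<Longrightarrow> \<not> P (s k) \<Longrightarrow> I (s (Suc k)) \<and> \<mu> (s (Suc k)) < \<mu> (s k)"
  shows "\<exists>K. P (s K) \<and> (\<forall>k<K. \<not> P (s k)) \<and> I (s K)"
proof -
  have bound: "I (s k) \<and> \<mu> (s k) + k \<le> \<mu> (s 0)" if "\<forall>k'<k. \<not> P (s k')" for k
    using that
  proof (induction k)
    case (Suc k)
    then show ?case
      using assms(2)[of k] by fastforce
  qed (simp add: assms(1))
  have "\<exists>K. P (s K)"
    using bound[of "Suc (\<mu> (s 0))"] by auto
  then obtain K where "P (s K)" "\<forall>k<K. \<not> P (s k)"
    using exists_least_iff[of "\<lambda>K. P (s K)"] by blast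
  with bound show ?thesis
    by blast
qed

theorem theorem1:
  fixes UU :: "'u set" and n Y Z :: nat and ord :: "nat \<Rightarrow> 'u"
    and W N0 \<beta> :: real and \<alpha> P :: "nat \<Rightarrow> real" and Pr :: "nat \<Rightarrow> 'u \<Rightarrow> real"
    and Cini :: "nat \<Rightarrow> 'u set"
  assumes "finite UU"
    and "W > 0" and "N0 > 0" and "\<beta> \<ge> 0"
    and "\<forall>i\<le>n. \<alpha> i \<ge> 0" and "(\<Sum>i\<le>n. \<alpha> i) = 1"
    and "\<forall>i\<le>n. \<forall>l\<in>UU. Pr i l > 0"
    and "\<forall>i<n. P i \<ge> 0"
    and "\<forall>k. ord k \<in> UU"
    and "is_partition UU n Cini"
  shows "\<forall>s :: nat \<Rightarrow> 'u alg_state.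
           s 0 = (Cini, 0, 0) \<and>
           (\<forall>k. \<not> alg_stopped UU (s k) \<longrightarrow>
                alg_step (throughput_util W \<alpha> Pr N0 P \<beta> n) n Y Z ord (s k) (s (Suc k)))
           \<longrightarrow> (\<exists>K. alg_stopped UU (s K) \<and> (\<forall>k<K. \<not> alg_stopped UU (s k))
                    \<and> is_partition UU n (fst (s K)))"
proof (intro allI impI)
  fix s :: "nat \<Rightarrow> 'u alg_state"
  assume run: "s 0 = (Cini, 0, 0) \<and>
    (\<forall>k. \<not> alg_stopped UU (s k) \<longrightarrow>
       alg_step (throughput_util W \<alpha> Pr N0 P \<beta> n) n Y Z ord (s k) (s (Suc k)))"
  show "\<exists>K. alg_stopped UU (s K) \<and> (\<forall>k<K. \<not> alg_stopped UU (s k))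
    \<and> is_partition UU n (fst (s K))"
  proof (rule first_stop_exists[where \<mu> =
      "switch_measure UU (throughput_util W \<alpha> Pr N0 P \<beta> n) n (10 * card UU)"])
    show "is_partition UU n (fst (s 0))"
      using run assms(10) by simp
  next
    fix k assume "is_partition UU n (fst (s k))" "\<not> alg_stopped UU (s k)"
    with run assms(1) show "is_partition UU n (fst (s (Suc k))) \<and>
        switch_measure UU (throughput_util W \<alpha> Pr N0 P \<beta> n) n (10 * card UU) (s (Suc k))
        < switch_measure UU (throughput_util W \<alpha> Pr N0 P \<beta> n) n (10 * card UU) (s k)"
      unfolding alg_stopped_def by (intro alg_step_switch_measure_less) auto
  qed
qed

end
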